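(* Let $\pi_1=(a_1,b_1,c_1,d_1)$ and $\pi_2=(a_2,b_2,c_2,d_2)$ be a chainable pair of patterns. Then $$\mathbf{S}_{\pi_1}\mathbf{S}_{\pi_2}=r(\pi_1,\pi_2)\,\mathbf{S}_{\pi_1*\pi_2}.$$
   Context: A pattern is a tuple $\pi=(a,b,c,d)$ of positive integers and $\mathbf{S}_\pi:=\mathbf{I}_a\otimes\mathbf{1}_{b\times c}\otimes\mathbf{I}_d\in\{0,1\}^{abd\times acd}$, where $\mathbf{I}_k$ is the identity, $\mathbf{1}_{p\times q}$ the all-ones matrix and $\otimes$ the Kronecker product. $\pi_1,\pi_2$ are chainable if $a_1c_1/a_2=b_2d_2/d_1$, this common value (denoted $r(\pi_1,\pi_2)$) is an integer, $a_1\mid a_2$ and $d_2\mid d_1$. Then $\pi_1*\pi_2:=(a_1,\,b_1d_1/d_2,\,a_2c_2/a_1,\,d_2)$. *)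

theory Defs
  imports "Jordan_Normal_Form.Matrix"
begin

definition kron :: "'a :: times mat \<Rightarrow> 'a mat \<Rightarrow> 'a mat" where
  "kron A B = mat (dim_row A * dim_row B) (dim_col A * dim_col B)
     (\<lambda>(i, j). A $$ (i div dim_row B, j div dim_col B) * B $$ (i mod dim_row B, j mod dim_col B))"

definition ones_mat :: "nat \<Rightarrow> nat \<Rightarrow> 'a :: one mat" where
  "ones_mat p q = mat p q (\<lambda>_. 1)"

type_synonym pattern = "nat \<times> nat \<times> nat \<times> nat"

definition is_pattern :: "pattern \<Rightarrow> bool" where
  "is_pattern \<pi> = (case \<pi> of (a, b, c, d) \<Rightarrow> 0 < a \<and> 0 < b \<and> 0 < c \<and> 0 < d)"

definition S_mat :: "pattern \<Rightarrow> 'a :: comm_semiring_1 mat" where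
  "S_mat \<pi> = (case \<pi> of (a, b, c, d) \<Rightarrow> kron (kron (1\<^sub>m a) (ones_mat b c)) (1\<^sub>m d))"

definition chainable :: "pattern \<Rightarrow> pattern \<Rightarrow> bool" where
  "chainable \<pi>1 \<pi>2 = (case \<pi>1 of (a1, b1, c1, d1) \<Rightarrow> case \<pi>2 of (a2, b2, c2, d2) \<Rightarrow>
     (rat_of_nat (a1 * c1) / rat_of_nat a2 = rat_of_nat (b2 * d2) / rat_of_nat d1)
     \<and> (rat_of_nat (a1 * c1) / rat_of_nat a2 \<in> \<int>)
     \<and> a1 dvd a2 \<and> d2 dvd d1)"

text \<open>r(pi1,pi2) = a1 c1 / a2 (an integer for chainable pairs).\<close>
definition r_chain :: "pattern \<Rightarrow> pattern \<Rightarrow> nat" where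
  "r_chain \<pi>1 \<pi>2 = (case \<pi>1 of (a1, b1, c1, d1) \<Rightarrow> case \<pi>2 of (a2, b2, c2, d2) \<Rightarrow>
     (a1 * c1) div a2)"

text \<open>pi1 * pi2 = (a1, b1 d1/d2, a2 c2/a1, d2); divisions are exact for chainable pairs.\<close>
definition chain_pat :: "pattern \<Rightarrow> pattern \<Rightarrow> pattern" where
  "chain_pat \<pi>1 \<pi>2 = (case \<pi>1 of (a1, b1, c1, d1) \<Rightarrow> case \<pi>2 of (a2, b2, c2, d2) \<Rightarrow>
     (a1, (b1 * d1) div d2, (a2 * c2) div a1, d2))"

end

theory Submission
  imports Defs
begin

text \<open>Chainability says precisely that \<pi>1 = (a, b, u r, d v) and \<pi>2 = (a u, r v, c, d)
  with r = r(\<pi>1, \<pi>2), and then \<pi>1 * \<pi>2 = (a, b v, u c, d). The entry (i, j) of S(a, b, c, d)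
  is 1 iff i div b d = j div c d and i \<equiv> j mod d. Hence the entry (i, k) of the product counts
  the middle indices j with j div r d v = k div c d and j \<equiv> i mod d v, of which there are
  exactly r, subject to two further conditions that hold (for all such j at once) iff (i, k) is
  a nonzero position of S(a, b v, u c, d).\<close>

lemma dim_S_mat [simp]:
  "dim_row (S_mat (a, b, c, d) :: 'a :: comm_semiring_1 mat) = a * b * d"
  "dim_col (S_mat (a, b, c, d) :: 'a :: comm_semiring_1 mat) = a * c * d"
  by (simp_all add: S_mat_def kron_def ones_mat_def)

lemma index_S_mat:
  assumes "i < a * b * d" and "j < a * c * d"
  shows "(S_mat (a, b, c, d) :: 'a :: comm_semiring_1 mat) $$ (i, j)
           = of_bool (i div (b * d) = j div (c * d) \<and> i mod d = j mod d)"
proof -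
  have pos: "0 < b" "0 < c" "0 < d"
    using assms by (auto intro!: Nat.gr0I)
  have "i div d < a * b" "j div d < a * c"
    using assms pos by (simp_all add: div_less_iff_less_mult mult.assoc mult.commute mult.left_commute)
  moreover have "i div d div b < a" "j div d div c < a"
    using calculation pos by (simp_all add: div_less_iff_less_mult mult.commute)
  moreover have "i div (b * d) = i div d div b" "j div (c * d) = j div d div c"
    by (metis div_mult2_eq mult.commute)+
  ultimately show ?thesis
    using assms pos by (simp add: S_mat_def kron_def ones_mat_def)
qed

lemma index_mult_of_bool_mat:
  fixes A B :: "'a :: comm_semiring_1 mat"
  assumes "A \<in> carrier_mat m n" and "B \<in> carrier_mat n p" and "i < m" and "k < p"
    and "\<And>j. j < n \<Longrightarrow> A $$ (i, j) = of_bool (P j)"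
    and "\<And>j. j < n \<Longrightarrow> B $$ (j, k) = of_bool (Q j)"
  shows "(A * B) $$ (i, k) = of_nat (card {j. j < n \<and> P j \<and> Q j})"
proof -
  have "(A * B) $$ (i, k) = (\<Sum>j<n. A $$ (i, j) * B $$ (j, k))"
    using assms(1-4) by (simp add: scalar_prod_def lessThan_atLeast0)
  also have "\<dots> = (\<Sum>j<n. of_bool (P j \<and> Q j))"
    using assms(5,6) by (intro sum.cong) auto
  also have "\<dots> = of_nat (card ({..<n} \<inter> {j. P j \<and> Q j}))"
    by (rule sum_of_bool_eq) simp_all
  also have "{..<n} \<inter> {j. P j \<and> Q j} = {j. j < n \<and> P j \<and> Q j}"
    by auto
  finally show ?thesis .
qed

lemma card_div_mod_eq:
  fixes q r D m :: nat
  assumes "0 < r" and "m < D"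
  shows "card {j. j div (r * D) = q \<and> j mod D = m} = r"
proof -
  have "{j. j div (r * D) = q \<and> j mod D = m} = (\<lambda>t. (q * r + t) * D + m) ` {..<r}"
  proof (intro equalityI subsetI)
    fix j assume "j \<in> {j. j div (r * D) = q \<and> j mod D = m}"
    then have "j div D div r = q" "j mod D = m"
      by (simp_all add: div_mult2_eq mult.commute)
    then have "j = (q * r + j div D mod r) * D + m"
      by (metis div_mult_mod_eq)
    then show "j \<in> (\<lambda>t. (q * r + t) * D + m) ` {..<r}"
      using assms(1) by auto
  next
    fix j assume "j \<in> (\<lambda>t. (q * r + t) * D + m) ` {..<r}"
    then obtain t where "t < r" "j = (q * r + t) * D + m" by auto
    then show "j \<in> {j. j div (r * D) = q \<and> j mod D = m}"
      using assms by (simp add: div_mult2_eq mult.commute)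
  qed
  moreover have "inj_on (\<lambda>t. (q * r + t) * D + m) {..<r}"
    using assms by (intro inj_onI) simp
  ultimately show ?thesis by (simp add: card_image)
qed

lemma S_mat_mult_middle_indices:
  fixes i k :: nat
  assumes "0 < r" and "0 < d" and "0 < v" and k: "k < a * (u * c) * d"
  shows "{j. j < a * (u * r) * (d * v)
            \<and> (i div (b * (d * v)) = j div (u * r * (d * v)) \<and> i mod (d * v) = j mod (d * v))
            \<and> (j div (r * v * d) = k div (c * d) \<and> j mod d = k mod d)}
       = {j. j div (r * (d * v)) = k div (c * d) \<and> j mod (d * v) = i mod (d * v)
            \<and> (i div (b * v * d) = k div (u * c * d) \<and> i mod d = k mod d)}"
proof (rule Collect_cong)
  define q where "q = k div (c * d)"
  have div_q: "j div (u * r * (d * v)) = k div (u * c * d)" if "j div (r * (d * v)) = q" for j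
    using that unfolding q_def by (metis div_mult2_eq mult.commute mult.left_commute)
  have mod_d: "j mod d = i mod d" if "j mod (d * v) = i mod (d * v)" for j
    using that by (metis dvd_triv_left mod_mod_cancel)
  have bound: "j < a * (u * r) * (d * v)" if "j div (r * (d * v)) = q" for j
  proof -
    have "0 < c"
      using k by (auto intro!: Nat.gr0I)
    then have "q < a * u"
      using k assms unfolding q_def by (simp add: div_less_iff_less_mult mult_ac)
    then have "j < a * u * (r * (d * v))"
      using that assms div_less_iff_less_mult[of "r * (d * v)" j "a * u"] by simp
    then show ?thesis
      by (simp add: mult_ac)
  qed
  have "r * v * d = r * (d * v)" "b * (d * v) = b * v * d"
    by (simp_all add: mult_ac)
  then show "(j < a * (u * r) * (d * v)
            \<and> (i div (b * (d * v)) = j div (u * r * (d * v)) \<and> i mod (d * v) = j mod (d * v))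
            \<and> (j div (r * v * d) = k div (c * d) \<and> j mod d = k mod d))
        \<longleftrightarrow> (j div (r * (d * v)) = k div (c * d) \<and> j mod (d * v) = i mod (d * v)
            \<and> (i div (b * v * d) = k div (u * c * d) \<and> i mod d = k mod d))" for j
    using div_q[of j] mod_d[of j] bound[of j] unfolding q_def
    by (metis (no_types))
qed

lemma S_mat_mult_factored:
  assumes "0 < r" and "0 < d" and "0 < v"
  shows "(S_mat (a, b, u * r, d * v) :: 'a :: comm_semiring_1 mat) * S_mat (a * u, r * v, c, d)
           = of_nat r \<cdot>\<^sub>m S_mat (a, b * v, u * c, d)"
proof (rule eq_matI)
  fix i k
  assume "i < dim_row (of_nat r \<cdot>\<^sub>m (S_mat (a, b * v, u * c, d) :: 'a mat))"
    and "k < dim_col (of_nat r \<cdot>\<^sub>m (S_mat (a, b * v, u * c, d) :: 'a mat))"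
  then have i: "i < a * b * (d * v)" and k: "k < a * (u * c) * d"
    by (simp_all add: mult_ac)
  define aligned where "aligned \<longleftrightarrow> i div (b * v * d) = k div (u * c * d) \<and> i mod d = k mod d"
  have "((S_mat (a, b, u * r, d * v) :: 'a mat) * S_mat (a * u, r * v, c, d)) $$ (i, k)
          = of_nat (card {j. j div (r * (d * v)) = k div (c * d) \<and> j mod (d * v) = i mod (d * v)
                             \<and> aligned})"
    unfolding aligned_def S_mat_mult_middle_indices[OF assms k, symmetric]
    by (rule index_mult_of_bool_mat) (use i k in \<open>simp_all add: carrier_matI index_S_mat mult_ac\<close>)
  also have "\<dots> = of_nat r * of_bool aligned"
    using card_div_mod_eq[of r "i mod (d * v)" "d * v"] assms by simp
  also have "\<dots> = (of_nat r \<cdot>\<^sub>m (S_mat (a, b * v, u * c, d) :: 'a mat)) $$ (i, k)"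
    using i k unfolding aligned_def by (simp add: index_S_mat mult_ac)
  finally show "((S_mat (a, b, u * r, d * v) :: 'a mat) * S_mat (a * u, r * v, c, d)) $$ (i, k)
               = (of_nat r \<cdot>\<^sub>m (S_mat (a, b * v, u * c, d) :: 'a mat)) $$ (i, k)" .
qed (simp_all add: mult_ac)

lemma chainable_factorization:
  assumes "is_pattern \<pi>1" and "is_pattern \<pi>2" and "chainable \<pi>1 \<pi>2"
  obtains a b c d u r v where "\<pi>1 = (a, b, u * r, d * v)" and "\<pi>2 = (a * u, r * v, c, d)"
    and "r_chain \<pi>1 \<pi>2 = r" and "chain_pat \<pi>1 \<pi>2 = (a, b * v, u * c, d)"
    and "0 < r" and "0 < d" and "0 < v"
proof -
  obtain a1 b1 c1 d1 a2 b2 c2 d2 where \<pi>: "\<pi>1 = (a1, b1, c1, d1)" "\<pi>2 = (a2, b2, c2, d2)"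
    by (cases \<pi>1, cases \<pi>2) auto
  have pos: "0 < a1" "0 < d1" "0 < a2" "0 < b2" "0 < d2"
    using assms(1,2) unfolding \<pi> is_pattern_def by auto
  have ratio: "rat_of_nat (a1 * c1) / rat_of_nat a2 = rat_of_nat (b2 * d2) / rat_of_nat d1"
    and integral: "rat_of_nat (a1 * c1) / rat_of_nat a2 \<in> \<int>"
    and "a1 dvd a2" and "d2 dvd d1"
    using assms(3) unfolding \<pi> chainable_def by auto
  then obtain u v where u: "a2 = a1 * u" and v: "d1 = d2 * v"
    by (auto elim!: dvdE)
  have "int a2 dvd int (a1 * c1)"
    using integral pos of_int_div_of_int_in_Ints_iff[of "int (a1 * c1)" "int a2", where 'a = rat]
    by simp
  then obtain r where r: "a1 * c1 = a2 * r"
    unfolding int_dvd_int_iff by (elim dvdE)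
  have "rat_of_nat r = rat_of_nat (b2 * d2) / rat_of_nat d1"
    using ratio pos by (simp add: r)
  then have "r * d1 = b2 * d2"
    using pos by (simp add: field_simps flip: of_nat_mult)
  then have b2: "b2 = r * v"
    using pos by (simp add: v mult_ac)
  have c1: "c1 = u * r"
    using r pos by (simp add: u mult_ac)
  show ?thesis
  proof
    show "\<pi>1 = (a1, b1, u * r, d2 * v)" and "\<pi>2 = (a1 * u, r * v, c2, d2)"
      using \<pi> u v b2 c1 by simp_all
    show "r_chain \<pi>1 \<pi>2 = r" and "chain_pat \<pi>1 \<pi>2 = (a1, b1 * v, u * c2, d2)"
      using pos unfolding \<pi> u v b2 c1 r_chain_def chain_pat_def by (simp_all add: mult_ac)
    show "0 < r" and "0 < d2" and "0 < v"
      using pos by (simp_all add: b2 v)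
  qed
qed

theorem proposition4p5:
  fixes \<pi>1 \<pi>2 :: pattern
  assumes "is_pattern \<pi>1" and "is_pattern \<pi>2" and "chainable \<pi>1 \<pi>2"
  shows "(S_mat \<pi>1 :: 'a :: comm_ring_1 mat) * S_mat \<pi>2
           = of_nat (r_chain \<pi>1 \<pi>2) \<cdot>\<^sub>m S_mat (chain_pat \<pi>1 \<pi>2)"
proof -
  obtain a b c d u r v where "\<pi>1 = (a, b, u * r, d * v)" and "\<pi>2 = (a * u, r * v, c, d)"
    and "r_chain \<pi>1 \<pi>2 = r" and "chain_pat \<pi>1 \<pi>2 = (a, b * v, u * c, d)"
    and "0 < r" and "0 < d" and "0 < v"
    using chainable_factorization[OF assms] .
  then show ?thesis
    by (simp add: S_mat_mult_factored)
qed

end
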